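(* Let $n\ge 1$ and $F=F_n(z_n)$. For $k=1,\dots,n$ define the $n\times n$ matrix $$E_k=M_k(2)-f_{k|n}\,e_{k|n}^T,$$ where $M_k(2)$ is the identity matrix with its $(k,k)$ entry replaced by $2$. Then $$F^{-1}=E_nE_{n-1}\cdots E_2E_1,$$ i.e. $F^{-1}=\prod_{i=1}^n\Big(M_{n+1-i}(2)-f_{n+1-i|n}\,e_{n+1-i|n}^T\Big)$ with the factors multiplied from left to right in order of increasing $i$.
   Context: $e_{k|n}\in\mathbb{R}^n$ denotes the $k$-th standard basis vector. For $1\le i\le n$, $e_{\bar i|n}\in\mathbb{R}^n$ has $k$-th entry $1$ if $i\mid k$, else $0$. For $2\le i\le n$, $f_{i|n}=\sum_{t=1}^{\lfloor \log_i n\rfloor} e_{\overline{i^t}|n}$, and by convention $f_{1|n}=1_n$ (all-ones vector). $F_n(z_n)=[f_{1|n}\ f_{2|n}\ \cdots\ f_{n|n}]\in\mathbb{R}^{n\times n}$. *)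

theory Defs
  imports "Jordan_Normal_Form.Matrix" Complex_Main
begin

text \<open>All vectors/matrices are over the reals, of dimension n. Paper indices 1..n
  correspond to JNF indices 0..n-1 (paper index k is JNF index k-1).\<close>

definition e_std :: "nat \<Rightarrow> nat \<Rightarrow> real vec" where
  "e_std k n = vec n (\<lambda>j. if j + 1 = k then 1 else 0)"

definition e_bar :: "nat \<Rightarrow> nat \<Rightarrow> real vec" where
  "e_bar i n = vec n (\<lambda>j. if i dvd (j + 1) then 1 else 0)"

definition f_vec :: "nat \<Rightarrow> nat \<Rightarrow> real vec" where
  "f_vec i n = (if i = 1 then vec n (\<lambda>j. 1)
     else vec n (\<lambda>j. \<Sum>t\<in>{1..nat \<lfloor>log (real i) (real n)\<rfloor>}. e_bar (i ^ t) n $ j))"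

definition F_mat :: "nat \<Rightarrow> real mat" where
  "F_mat n = mat n n (\<lambda>(r, c). f_vec (c + 1) n $ r)"

definition M2 :: "nat \<Rightarrow> nat \<Rightarrow> real mat" where
  "M2 k n = mat n n (\<lambda>(r, c). if r = c then (if r + 1 = k then 2 else 1) else 0)"

definition outer :: "real vec \<Rightarrow> real vec \<Rightarrow> real mat" where
  "outer u v = mat (dim_vec u) (dim_vec v) (\<lambda>(r, c). u $ r * v $ c)"

definition E_mat :: "nat \<Rightarrow> nat \<Rightarrow> real mat" where
  "E_mat k n = M2 k n - outer (f_vec k n) (e_std k n)"

end

theory Submission
  imports Defs "Jordan_Normal_Form.Determinant"
begin

text \<open>The matrix F is lower unitriangular: f_{k|n} vanishes above position k and has entry 1
  at position k, because among the powers k^t (t \<ge> 1) only k itself divides k.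
  Let F^(m) be F with columns m+1, ..., n replaced by the corresponding unit vectors.
  Right multiplication by E_m only changes column m, which becomes 2 f_{m|n} - F^(m) f_{m|n};
  as the columns of F^(m) after m are unit vectors, F^(m) f_{m|n} = 2 f_{m|n} - e_{m|n},
  so F^(m) E_m = F^(m-1). Peeling off the columns gives F E_n ... E_1 = F^(0) = I,
  and a one-sided inverse of a square matrix is two-sided.\<close>

lemma one_le_nat_floor_log:
  assumes "2 \<le> b" "b \<le> x"
  shows "1 \<le> nat \<lfloor>log (real b) (real x)\<rfloor>"
proof -
  have "1 \<le> log (real b) (real x)" using assms by (subst le_log_iff) auto
  thus ?thesis by linarith
qed

lemma power_dvd_self_imp_le_one:
  assumes "2 \<le> (b::nat)" "b ^ t dvd b"
  shows "t \<le> 1"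
proof (rule ccontr)
  assume "\<not> t \<le> 1"
  hence "b ^ 2 \<le> b ^ t" using assms(1) by (intro power_increasing) auto
  also have "\<dots> \<le> b" using assms dvd_imp_le by auto
  also have "\<dots> < b ^ 2" using assms(1) by (simp add: power2_eq_square)
  finally show False by simp
qed

lemma f_vec_nth_less:
  assumes "j < c" "c < n"
  shows "f_vec (c + 1) n $ j = 0"
proof -
  have "\<not> (c + 1) ^ t dvd (j + 1)" if "t \<ge> 1" for t
  proof
    assume "(c + 1) ^ t dvd (j + 1)"
    hence "(c + 1) ^ t \<le> j + 1" by (simp add: dvd_imp_le)
    moreover have "c + 1 \<le> (c + 1) ^ t" using that by (simp add: self_le_power)
    ultimately show False using assms by simp
  qed
  thus ?thesis using assms unfolding f_vec_def e_bar_def by auto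
qed

lemma f_vec_nth_diag:
  assumes "c < n"
  shows "f_vec (c + 1) n $ c = 1"
proof (cases "c = 0")
  case True
  thus ?thesis using assms unfolding f_vec_def by auto
next
  case False
  let ?L = "nat \<lfloor>log (real (c + 1)) (real n)\<rfloor>"
  have "f_vec (c + 1) n $ c = (\<Sum>t\<in>{1..?L}. if (c + 1) ^ t dvd (c + 1) then 1 else 0)"
    using assms False unfolding f_vec_def e_bar_def by simp
  also have "\<dots> = (\<Sum>t\<in>{1..?L}. if t = 1 then 1 else 0)"
  proof (rule sum.cong)
    fix t assume "t \<in> {1..?L}"
    hence "(c + 1) ^ t dvd (c + 1) \<longleftrightarrow> t = 1"
      using False power_dvd_self_imp_le_one[of "c + 1" t] by auto
    thus "(if (c + 1) ^ t dvd (c + 1) then 1 else 0) = (if t = 1 then 1 else (0::real))" by simp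
  qed simp
  also have "\<dots> = 1"
    using one_le_nat_floor_log[of "c + 1" n] False assms by simp
  finally show ?thesis .
qed

lemma E_mat_dims [simp]: "dim_row (E_mat k n) = n" "dim_col (E_mat k n) = n"
  unfolding E_mat_def M2_def outer_def f_vec_def e_std_def by auto

lemma E_mat_index:
  assumes "j < n" "c < n"
  shows "E_mat k n $$ (j, c) =
    (if j = c then (if j + 1 = k then 2 else 1) else 0) - f_vec k n $ j * (if c + 1 = k then 1 else 0)"
  using assms unfolding E_mat_def M2_def outer_def by (auto simp: f_vec_def e_std_def)

text \<open>F_upto n m is the matrix F^(m) of the proof idea (0-based: columns c \<ge> m are unit vectors).\<close>
definition F_upto :: "nat \<Rightarrow> nat \<Rightarrow> real mat" where
  "F_upto n m = mat n n (\<lambda>(r, c). if c < m then F_mat n $$ (r, c) else if r = c then 1 else 0)"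

lemma F_upto_dims [simp]: "dim_row (F_upto n m) = n" "dim_col (F_upto n m) = n"
  unfolding F_upto_def by auto

lemma F_upto_0: "F_upto n 0 = 1\<^sub>m n"
  by (auto simp: F_upto_def)

lemma F_upto_self: "F_upto n n = F_mat n"
  by (rule eq_matI) (auto simp: F_upto_def F_mat_def)

lemma F_upto_Suc_mult_E_mat:
  assumes "c < n"
  shows "F_upto n (c + 1) * E_mat (c + 1) n = F_upto n c"
proof (rule eq_matI)
  fix r d assume "r < dim_row (F_upto n c)" "d < dim_col (F_upto n c)"
  hence r: "r < n" and d: "d < n" by auto
  let ?F = "F_upto n (c + 1)" and ?f = "f_vec (c + 1) n"
  have "(?F * E_mat (c + 1) n) $$ (r, d) = (\<Sum>j<n. ?F $$ (r, j) * E_mat (c + 1) n $$ (j, d))"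
    using r d by (simp add: scalar_prod_def lessThan_atLeast0)
  also have "\<dots> = F_upto n c $$ (r, d)"
  proof (cases "d = c")
    case False
    have "(\<Sum>j<n. ?F $$ (r, j) * E_mat (c + 1) n $$ (j, d)) = (\<Sum>j<n. if j = d then ?F $$ (r, d) else 0)"
      using d False by (intro sum.cong) (auto simp: E_mat_index)
    thus ?thesis using d r False by (simp add: F_upto_def)
  next
    case True
    \<comment> \<open>column c of the product is 2 f - F^(c+1) f, where F^(c+1) f = f + (the part of f below c)\<close>
    have "(\<Sum>j<n. ?F $$ (r, j) * E_mat (c + 1) n $$ (j, d)) =
      (\<Sum>j<n. (if j = c then 2 * ?f $ r else 0)
              - ((if j = c then ?f $ r else 0) + (if j = r \<and> c < r then ?f $ r else 0)))"
    proof (rule sum.cong)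
      fix j assume "j \<in> {..<n}"
      thus "?F $$ (r, j) * E_mat (c + 1) n $$ (j, d) = (if j = c then 2 * ?f $ r else 0)
              - ((if j = c then ?f $ r else 0) + (if j = r \<and> c < r then ?f $ r else 0))"
        using True r assms f_vec_nth_less[of j c n] f_vec_nth_diag[of c n]
        by (cases "j < c"; cases "j = c"; auto simp: E_mat_index F_upto_def F_mat_def)
    qed simp
    also have "\<dots> = (if r \<le> c then ?f $ r else 0)"
      using r assms by (simp add: sum_subtractf sum.distrib)
    also have "\<dots> = F_upto n c $$ (r, d)"
      using True r assms f_vec_nth_less[of r c n] f_vec_nth_diag[of c n] by (auto simp: F_upto_def)
    finally show ?thesis .
  qed
  finally show "(?F * E_mat (c + 1) n) $$ (r, d) = F_upto n c $$ (r, d)" .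
qed (auto simp: F_upto_def)

lemma F_upto_mult_E_mats:
  assumes "m \<le> n"
  shows "foldl (*) (F_upto n m) (map (\<lambda>i. E_mat i n) (rev [1..<m + 1])) = 1\<^sub>m n"
  using assms
proof (induction m)
  case 0
  show ?case by (simp add: F_upto_0)
next
  case (Suc m)
  have "foldl (*) (F_upto n (Suc m)) (map (\<lambda>i. E_mat i n) (rev [1..<Suc m + 1]))
      = foldl (*) (F_upto n (m + 1) * E_mat (m + 1) n) (map (\<lambda>i. E_mat i n) (rev [1..<m + 1]))"
    by simp
  also have "F_upto n (m + 1) * E_mat (m + 1) n = F_upto n m"
    using Suc.prems F_upto_Suc_mult_E_mat[of m n] by simp
  finally show ?case using Suc by simp
qed

lemma foldl_mult_carrier_mat:
  assumes "B \<in> carrier_mat n n" "\<forall>X\<in>set Xs. X \<in> carrier_mat n n"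
  shows "foldl (*) B Xs \<in> carrier_mat n n"
  using assms by (induction Xs arbitrary: B) auto

lemma foldl_mult_mat_assoc:
  assumes "A \<in> carrier_mat m n" "B \<in> carrier_mat n n" "\<forall>X\<in>set Xs. X \<in> carrier_mat n n"
  shows "foldl (*) (A * B) Xs = A * foldl (*) B Xs"
  using assms(2,3)
proof (induction Xs arbitrary: B)
  case (Cons X Xs)
  have "foldl (*) (A * B) (X # Xs) = foldl (*) (A * (B * X)) Xs"
    using assms(1) Cons.prems by (simp add: assoc_mult_mat[of A m n B n X n])
  also have "\<dots> = A * foldl (*) (B * X) Xs"
    using Cons.prems by (intro Cons.IH) auto
  finally show ?case by simp
qed simp

theorem theorem5:
  fixes n :: nat
  assumes "n \<ge> 1"
  shows "F_mat n * foldl (*) (1\<^sub>m n) (map (\<lambda>i. E_mat (n + 1 - i) n) [1..<n+1]) = 1\<^sub>m n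
       \<and> foldl (*) (1\<^sub>m n) (map (\<lambda>i. E_mat (n + 1 - i) n) [1..<n+1]) * F_mat n = 1\<^sub>m n"
proof -
  let ?Es = "map (\<lambda>i. E_mat (n + 1 - i) n) [1..<n+1]"
  have Es: "?Es = map (\<lambda>i. E_mat i n) (rev [1..<n+1])"
    by (rule nth_equalityI) (auto simp del: upt_Suc simp add: rev_nth nth_upt Suc_diff_Suc)
  have F: "F_mat n \<in> carrier_mat n n" by (simp add: F_mat_def)
  have Q: "foldl (*) (1\<^sub>m n) ?Es \<in> carrier_mat n n"
    by (rule foldl_mult_carrier_mat) auto
  have "F_mat n * foldl (*) (1\<^sub>m n) ?Es = foldl (*) (F_mat n * 1\<^sub>m n) ?Es"
    using F by (intro foldl_mult_mat_assoc[symmetric]) auto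
  also have "\<dots> = 1\<^sub>m n"
    using F_upto_mult_E_mats[of n n] F Es by (simp add: F_upto_self)
  finally have left: "F_mat n * foldl (*) (1\<^sub>m n) ?Es = 1\<^sub>m n" .
  with mat_mult_left_right_inverse[OF F Q left] show ?thesis by simp
qed

end
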